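(* Let $X$ be a strongly $0$-dimensional $\sigma$-compact metrizable space. Then $\mathrm{SR}(X)$ is a $G_\delta$ subset of $(\mathrm{Met}(X),\mathcal{D}_X)$.
   Context: $\mathrm{Met}(X)$ denotes the set of all metrics on $X$ generating the topology of $X$, equipped with the supremum metric $\mathcal{D}_X(d,e)=\sup_{x,y\in X}|d(x,y)-e(x,y)|$ (values in $[0,\infty]$) and the topology generated by its open balls. A topological space is strongly $0$-dimensional if for every pair $A,B$ of disjoint closed subsets there is a clopen set $V$ with $A\subseteq V$, $V\cap B=\emptyset$. A metric $d$ is strongly rigid if $d(x,y)=d(u,v)\neq0$ implies $\{x,y\}=\{u,v\}$; $\mathrm{SR}(X)$ is the set of strongly rigid metrics in $\mathrm{Met}(X)$. A $G_\delta$ set is a countable intersection of open sets. *)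

theory Defs
  imports "HOL-Analysis.Analysis"
begin

text \<open>A metric is a function
  of type 'a => 'a => real; to have one canonical representative per metric we require
  it to vanish outside topspace X x topspace X.\<close>
definition Met :: "'a topology \<Rightarrow> ('a \<Rightarrow> 'a \<Rightarrow> real) set" where
  "Met X = {d. Metric_space (topspace X) d \<and> Metric_space.mtopology (topspace X) d = X \<and>
              (\<forall>x y. x \<notin> topspace X \<or> y \<notin> topspace X \<longrightarrow> d x y = 0)}"

definition supD :: "'a topology \<Rightarrow> ('a \<Rightarrow> 'a \<Rightarrow> real) \<Rightarrow> ('a \<Rightarrow> 'a \<Rightarrow> real) \<Rightarrow> ennreal" where
  "supD X d e = (SUP p \<in> topspace X \<times> topspace X. ennreal \<bar>d (fst p) (snd p) - e (fst p) (snd p)\<bar>)"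

definition Met_topology :: "'a topology \<Rightarrow> ('a \<Rightarrow> 'a \<Rightarrow> real) topology" where
  "Met_topology X = topology_generated_by
     {{e \<in> Met X. supD X d e < ennreal r} | d r. d \<in> Met X \<and> r > 0}"

definition strongly_zero_dim :: "'a topology \<Rightarrow> bool" where
  "strongly_zero_dim X \<longleftrightarrow> (\<forall>A B. closedin X A \<and> closedin X B \<and> A \<inter> B = {} \<longrightarrow>
      (\<exists>V. closedin X V \<and> openin X V \<and> A \<subseteq> V \<and> V \<inter> B = {}))"

definition sigma_compact_space :: "'a topology \<Rightarrow> bool" where
  "sigma_compact_space X \<longleftrightarrow> (\<exists>K :: nat \<Rightarrow> 'a set. (\<forall>n. compactin X (K n)) \<and> \<Union> (range K) = topspace X)"

definition strongly_rigid :: "'a set \<Rightarrow> ('a \<Rightarrow> 'a \<Rightarrow> real) \<Rightarrow> bool" where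
  "strongly_rigid M d \<longleftrightarrow> (\<forall>x\<in>M. \<forall>y\<in>M. \<forall>u\<in>M. \<forall>v\<in>M.
      d x y = d u v \<and> d x y \<noteq> 0 \<longrightarrow> {x, y} = {u, v})"

definition SR :: "'a topology \<Rightarrow> ('a \<Rightarrow> 'a \<Rightarrow> real) set" where
  "SR X = {d \<in> Met X. strongly_rigid (topspace X) d}"

end

theory Submission
  imports Defs
begin

text \<open>A metric \<open>d\<close> is strongly rigid iff \<open>d x y \<noteq> d u v\<close> for every quadruple with \<open>x \<noteq> y\<close> and
  \<open>(u, v) \<notin> {(x, y), (y, x)}\<close>. These quadruples form an open subset of \<open>X\<^sup>4\<close>; as \<open>X\<^sup>4\<close> is metrizable
  and \<open>\<sigma>\<close>-compact, that open set is \<open>F\<^sub>\<sigma>\<close> and hence a countable union of compact sets \<open>C\<close>.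
  For compact \<open>C\<close> the metrics separating the two distances on all of \<open>C\<close> form a \<open>\<D>\<^sub>X\<close>-open
  set: \<open>\<bar>d x y - d u v\<bar>\<close> attains a positive minimum \<open>\<delta>\<close> on \<open>C\<close>, and every \<open>e\<close> within
  \<open>\<delta>/2\<close> of \<open>d\<close> still separates them. Hence \<open>SR(X)\<close> is a countable intersection of open sets.\<close>

lemma continuous_map_quadruple_components:
  "continuous_map (prod_topology (prod_topology X X) (prod_topology X X)) X (\<lambda>q. fst (fst q))"
  "continuous_map (prod_topology (prod_topology X X) (prod_topology X X)) X (\<lambda>q. snd (fst q))"
  "continuous_map (prod_topology (prod_topology X X) (prod_topology X X)) X (\<lambda>q. fst (snd q))"
  "continuous_map (prod_topology (prod_topology X X) (prod_topology X X)) X (\<lambda>q. snd (snd q))"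
  by (auto intro: continuous_map_compose[unfolded o_def] continuous_map_fst continuous_map_snd)

lemma compactin_continuous_map_pos_lower_bound:
  assumes "compactin T C" "continuous_map T euclideanreal g" "\<And>t. t \<in> C \<Longrightarrow> g t > 0"
  obtains \<delta> where "\<delta> > 0" "\<And>t. t \<in> C \<Longrightarrow> \<delta> \<le> g t"
proof (cases "C = {}")
  case True
  then show ?thesis
    using that[of 1] by auto
next
  case False
  have "compact (g ` C)"
    using image_compactin[OF assms(1,2)] by simp
  then obtain t0 where "t0 \<in> C" "\<And>t. t \<in> C \<Longrightarrow> g t0 \<le> g t"
    using compact_attains_inf[of "g ` C"] False by auto
  then show ?thesis
    using that[of "g t0"] assms(3) by blast
qed

lemma sigma_compact_space_prod_topology:
  assumes "sigma_compact_space X" "sigma_compact_space Y"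
  shows "sigma_compact_space (prod_topology X Y)"
proof -
  obtain K L :: "nat \<Rightarrow> _" where K: "\<And>n. compactin X (K n)" "\<Union> (range K) = topspace X"
    and L: "\<And>n. compactin Y (L n)" "\<Union> (range L) = topspace Y"
    using assms unfolding sigma_compact_space_def by metis
  have "topspace (prod_topology X Y) = \<Union> (range K) \<times> \<Union> (range L)"
    by (simp add: K(2) L(2))
  also have "\<dots> = (\<Union>m. \<Union>n. K m \<times> L n)"
    by blast
  finally have "topspace (prod_topology X Y) = (\<Union>m. \<Union>n. K m \<times> L n)" .
  moreover have "(countable union_of compactin (prod_topology X Y)) (\<Union>m. \<Union>n. K m \<times> L n)"
    using K(1) L(1)
    by (intro countable_union_of_UN countable_union_of_inc) (auto simp: compactin_Times)
  ultimately show ?thesis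
    unfolding sigma_compact_space_def by (simp add: countable_union_of_explicit)
qed

lemma fsigma_in_imp_countable_union_of_compactin:
  assumes "sigma_compact_space X" "fsigma_in X S"
  shows "(countable union_of compactin X) S"
proof -
  obtain K :: "nat \<Rightarrow> _" where K: "\<And>n. compactin X (K n)" "\<Union> (range K) = topspace X"
    using assms(1) unfolding sigma_compact_space_def by metis
  obtain \<F> where "countable \<F>" "\<And>F. F \<in> \<F> \<Longrightarrow> closedin X F" "\<Union> \<F> = S"
    using assms(2) unfolding fsigma_in_def union_of_def by auto
  moreover have "F = (\<Union>n. F \<inter> K n)" if "closedin X F" for F
    using closedin_subset[OF that] K(2) by blast
  ultimately have "S = (\<Union>F\<in>\<F>. \<Union>n. F \<inter> K n)"
    by auto
  also have "(countable union_of compactin X) \<dots>"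
    using \<open>countable \<F>\<close> \<open>\<And>F. F \<in> \<F> \<Longrightarrow> closedin X F\<close> K(1)
    by (intro countable_union_of_UN countable_union_of_inc closed_Int_compactin) auto
  finally show ?thesis .
qed

lemma Met_continuous_map:
  assumes "d \<in> Met X" "continuous_map T X f" "continuous_map T X g"
  shows "continuous_map T euclideanreal (\<lambda>t. d (f t) (g t))"
proof -
  interpret Metric_space "topspace X" d
    using assms(1) by (simp add: Met_def)
  have "mtopology = X"
    using assms(1) by (simp add: Met_def)
  then show ?thesis
    using continuous_map_mdist[of T "metric (topspace X, d)" f g] assms(2,3) by simp
qed

lemma supD_self [simp]: "supD X d d = 0"
  by (simp add: supD_def flip: bot_ennreal)

lemma dist_diff_less_if_supD_less:
  assumes "supD X d e < ennreal r" "a \<in> topspace X" "b \<in> topspace X"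
  shows "\<bar>d a b - e a b\<bar> < r"
proof -
  have "ennreal \<bar>d a b - e a b\<bar> \<le> supD X d e"
    unfolding supD_def using assms(2,3) by (intro SUP_upper2[of "(a, b)"]) auto
  also have "\<dots> < ennreal r"
    by (fact assms(1))
  finally show ?thesis
    by (simp add: ennreal_less_iff)
qed

lemma openin_Met_topology_ball:
  assumes "d \<in> Met X" "r > 0"
  shows "openin (Met_topology X) {e \<in> Met X. supD X d e < ennreal r}"
  unfolding Met_topology_def using assms by (intro topology_generated_by_Basis) blast

lemma topspace_Met_topology: "topspace (Met_topology X) = Met X"
proof -
  have "d \<in> \<Union> {{e \<in> Met X. supD X d' e < ennreal r} | d' r. d' \<in> Met X \<and> r > 0}"
    if "d \<in> Met X" for d
    using that
    by (intro UnionI[of "{e \<in> Met X. supD X d e < ennreal 1}"] CollectI exI[of _ d] exI[of _ 1]) auto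
  then show ?thesis
    unfolding Met_topology_def topology_generated_by_topspace by auto
qed

definition distinct_distances_on :: "(('a \<times> 'a) \<times> ('a \<times> 'a)) set \<Rightarrow> ('a \<Rightarrow> 'a \<Rightarrow> real) \<Rightarrow> bool"
  where "distinct_distances_on C d \<longleftrightarrow> (\<forall>((x, y), (u, v)) \<in> C. d x y \<noteq> d u v)"

lemma distinct_distances_on_Union:
  "distinct_distances_on (\<Union> \<C>) d \<longleftrightarrow> (\<forall>C\<in>\<C>. distinct_distances_on C d)"
  by (auto simp: distinct_distances_on_def)

lemma openin_Met_topology_distinct_distances_on:
  assumes "compactin (prod_topology (prod_topology X X) (prod_topology X X)) C"
  shows "openin (Met_topology X) {d \<in> Met X. distinct_distances_on C d}"
proof (subst openin_subopen, intro ballI)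
  let ?Q = "prod_topology (prod_topology X X) (prod_topology X X)"
  fix d
  assume "d \<in> {d \<in> Met X. distinct_distances_on C d}"
  then have d: "d \<in> Met X" "distinct_distances_on C d"
    by auto
  define g where "g q = \<bar>d (fst (fst q)) (snd (fst q)) - d (fst (snd q)) (snd (snd q))\<bar>" for q
  have "continuous_map ?Q euclideanreal g"
    unfolding g_def using continuous_map_quadruple_components
    by (intro continuous_map_real_abs continuous_map_diff Met_continuous_map[OF d(1)]) auto
  moreover have "g q > 0" if "q \<in> C" for q
    using d(2) that unfolding distinct_distances_on_def g_def by auto
  ultimately obtain \<delta> where \<delta>: "\<delta> > 0" "\<And>q. q \<in> C \<Longrightarrow> \<delta> \<le> g q"
    using compactin_continuous_map_pos_lower_bound[OF assms] by blast
  define B where "B = {e \<in> Met X. supD X d e < ennreal (\<delta> / 2)}"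
  have "e x y \<noteq> e u v" if "e \<in> B" "((x, y), (u, v)) \<in> C" for e x y u v
  proof -
    have "x \<in> topspace X" "y \<in> topspace X" "u \<in> topspace X" "v \<in> topspace X"
      using compactin_subset_topspace[OF assms] that(2) by auto
    with that(1) have "\<bar>d x y - e x y\<bar> < \<delta> / 2" "\<bar>d u v - e u v\<bar> < \<delta> / 2"
      unfolding B_def by (blast intro: dist_diff_less_if_supD_less)+
    moreover have "\<delta> \<le> \<bar>d x y - d u v\<bar>"
      using \<delta>(2)[OF that(2)] by (simp add: g_def)
    ultimately show ?thesis
      by linarith
  qed
  then have "B \<subseteq> {d \<in> Met X. distinct_distances_on C d}"
    by (auto simp: B_def distinct_distances_on_def)
  moreover have "openin (Met_topology X) B" "d \<in> B"
    unfolding B_def using d(1) \<delta>(1) by (simp_all add: openin_Met_topology_ball)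
  ultimately show "\<exists>T. openin (Met_topology X) T \<and> d \<in> T \<and> T \<subseteq> {d \<in> Met X. distinct_distances_on C d}"
    by blast
qed

definition nondegenerate_quadruples :: "'a topology \<Rightarrow> (('a \<times> 'a) \<times> ('a \<times> 'a)) set"
  where "nondegenerate_quadruples X =
    {((x, y), (u, v)). x \<in> topspace X \<and> y \<in> topspace X \<and> u \<in> topspace X \<and> v \<in> topspace X \<and>
       x \<noteq> y \<and> (u, v) \<noteq> (x, y) \<and> (u, v) \<noteq> (y, x)}"

lemma strongly_rigid_iff_distinct_distances_on:
  assumes "Metric_space (topspace X) d"
  shows "strongly_rigid (topspace X) d \<longleftrightarrow> distinct_distances_on (nondegenerate_quadruples X) d"
proof -
  have nonzero: "d x y \<noteq> 0 \<longleftrightarrow> x \<noteq> y" if "x \<in> topspace X" "y \<in> topspace X" for x y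
    using Metric_space.zero[OF assms that] by simp
  have "distinct_distances_on (nondegenerate_quadruples X) d \<longleftrightarrow>
      (\<forall>x\<in>topspace X. \<forall>y\<in>topspace X. \<forall>u\<in>topspace X. \<forall>v\<in>topspace X.
        x \<noteq> y \<and> (u, v) \<noteq> (x, y) \<and> (u, v) \<noteq> (y, x) \<longrightarrow> d x y \<noteq> d u v)"
    unfolding distinct_distances_on_def nondegenerate_quadruples_def by force
  also have "\<dots> \<longleftrightarrow> strongly_rigid (topspace X) d"
  proof -
    have pointwise: "(x \<noteq> y \<and> (u, v) \<noteq> (x, y) \<and> (u, v) \<noteq> (y, x) \<longrightarrow> d x y \<noteq> d u v) \<longleftrightarrow>
        (d x y = d u v \<and> d x y \<noteq> 0 \<longrightarrow> x = u \<and> y = v \<or> x = v \<and> y = u)"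
      if "x \<in> topspace X" "y \<in> topspace X" for x y u v
      using nonzero[OF that] by auto
    then show ?thesis
      unfolding strongly_rigid_def doubleton_eq_iff by (intro ball_cong[OF refl]) (rule pointwise)
  qed
  finally show ?thesis ..
qed

lemma openin_nondegenerate_quadruples:
  assumes "Hausdorff_space X"
  shows "openin (prod_topology (prod_topology X X) (prod_topology X X)) (nondegenerate_quadruples X)"
proof -
  let ?Q = "prod_topology (prod_topology X X) (prod_topology X X)"
  define diagonal_pairs where "diagonal_pairs = {q \<in> topspace ?Q. fst (fst q) = snd (fst q)}"
  define equal_pairs where "equal_pairs = {q \<in> topspace ?Q. fst q = snd q}"
  define swapped_pairs where "swapped_pairs = {q \<in> topspace ?Q. fst q = (snd (snd q), fst (snd q))}"
  have HXX: "Hausdorff_space (prod_topology X X)"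
    using assms by (simp add: Hausdorff_space_prod_topology)
  have "closedin ?Q diagonal_pairs"
    unfolding diagonal_pairs_def using assms continuous_map_quadruple_components
    by (intro closedin_continuous_maps_eq) auto
  moreover have "closedin ?Q equal_pairs"
    unfolding equal_pairs_def
    by (rule closedin_continuous_maps_eq[OF HXX continuous_map_fst continuous_map_snd])
  moreover have "closedin ?Q swapped_pairs"
    unfolding swapped_pairs_def
    by (intro closedin_continuous_maps_eq[OF HXX continuous_map_fst])
      (simp add: continuous_map_paired continuous_map_quadruple_components)
  ultimately have "openin ?Q (topspace ?Q - (diagonal_pairs \<union> equal_pairs \<union> swapped_pairs))"
    by (intro openin_diff openin_topspace closedin_Un)
  moreover have "topspace ?Q - (diagonal_pairs \<union> equal_pairs \<union> swapped_pairs) = nondegenerate_quadruples X"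
    unfolding diagonal_pairs_def equal_pairs_def swapped_pairs_def nondegenerate_quadruples_def by auto
  ultimately show ?thesis
    by simp
qed

theorem proposition5p3:
  fixes X :: "'a topology"
  assumes "strongly_zero_dim X" and "sigma_compact_space X" and "metrizable_space X"
  shows "gdelta_in (Met_topology X) (SR X)"
proof -
  let ?Q = "prod_topology (prod_topology X X) (prod_topology X X)"
  have "fsigma_in ?Q (nondegenerate_quadruples X)"
    using assms(3) by (intro open_imp_fsigma_in openin_nondegenerate_quadruples)
      (simp_all add: metrizable_space_prod_topology metrizable_imp_Hausdorff_space)
  moreover have "sigma_compact_space ?Q"
    using assms(2) by (simp add: sigma_compact_space_prod_topology)
  ultimately have "(countable union_of compactin ?Q) (nondegenerate_quadruples X)"
    by (rule fsigma_in_imp_countable_union_of_compactin[rotated])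
  then obtain \<C> where \<C>: "countable \<C>" "\<And>C. C \<in> \<C> \<Longrightarrow> compactin ?Q C"
    "\<Union> \<C> = nondegenerate_quadruples X"
    unfolding union_of_def by auto
  have "d \<in> SR X \<longleftrightarrow> d \<in> Met X \<and> (\<forall>C\<in>\<C>. distinct_distances_on C d)" for d
  proof (cases "d \<in> Met X")
    case True
    then have "Metric_space (topspace X) d"
      by (simp add: Met_def)
    then show ?thesis
      using True by (simp add: SR_def strongly_rigid_iff_distinct_distances_on
          distinct_distances_on_Union flip: \<C>(3))
  qed (simp add: SR_def)
  then have "SR X = topspace (Met_topology X) \<inter> (\<Inter>C\<in>\<C>. {d \<in> Met X. distinct_distances_on C d})"
    unfolding topspace_Met_topology by blast
  then show ?thesis
    unfolding gdelta_in_alt using \<C>(1,2)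
    by (simp add: countable_intersection_of_inter countable_intersection_of_INT
        countable_intersection_of_inc openin_Met_topology_distinct_distances_on)
qed

end
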